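(* Let $G$ be a group with identity $e$, $A$ a finite set with $|A|\ge2$, $S\subseteq G$ finite with $e\in S$. Suppose $(\mathcal P,f)$ generates a local map $\mu:A^S\to A$ and $|\mathcal P|$ is not a multiple of $|A|$. Then every $s\in S\setminus\{e\}$ is essential for $\mu$.
   Context: $A^S$ is the set of functions $S\to A$. For $s\in S$, $\mathrm{Res}_s(z)=z|_{S\setminus\{s\}}$. An element $s\in S$ is essential for $\mu$ if there exist $z,w\in A^S$ with $\mathrm{Res}_s(z)=\mathrm{Res}_s(w)$ but $\mu(z)\neq\mu(w)$. The pair $(\mathcal P,f)$ generates $\mu$ if $\mathcal P=\{z\in A^S:\mu(z)\neq z(e)\}$ and $f:\mathcal P\to A$ is the restriction of $\mu$ to $\mathcal P$. *)

theory Defs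
  imports "HOL-Algebra.Group" "HOL-Library.FuncSet"
begin

text \<open>Configurations in A^S are represented as extensional functions on S
  with values in A, i.e. elements of PiE S (%_. A).\<close>

definition Res :: "'g set \<Rightarrow> 'g \<Rightarrow> ('g \<Rightarrow> 'a) \<Rightarrow> ('g \<Rightarrow> 'a)" where
  "Res S s z = restrict z (S - {s})"

definition essential :: "'a set \<Rightarrow> 'g set \<Rightarrow> (('g \<Rightarrow> 'a) \<Rightarrow> 'a) \<Rightarrow> 'g \<Rightarrow> bool" where
  "essential A S \<mu> s \<longleftrightarrow>
     (\<exists>z \<in> S \<rightarrow>\<^sub>E A. \<exists>w \<in> S \<rightarrow>\<^sub>E A. Res S s z = Res S s w \<and> \<mu> z \<noteq> \<mu> w)"

definition generates ::
  "'a set \<Rightarrow> 'g set \<Rightarrow> 'g \<Rightarrow> ('g \<Rightarrow> 'a) set \<Rightarrow> (('g \<Rightarrow> 'a) \<Rightarrow> 'a)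
     \<Rightarrow> (('g \<Rightarrow> 'a) \<Rightarrow> 'a) \<Rightarrow> bool" where
  "generates A S e P f \<mu> \<longleftrightarrow>
     P = {z \<in> S \<rightarrow>\<^sub>E A. \<mu> z \<noteq> z e} \<and> (\<forall>z \<in> P. f z = \<mu> z)"

end

theory Submission
  imports Defs
begin

text \<open>If s \<noteq> e is inessential, then changing the s-coordinate of a configuration changes
  neither \<mu> z nor z e, so \<P> is a union of full fibres of the restriction map away from s.
  Each fibre has |A| elements, hence |A| divides |\<P>|.\<close>

lemma PiE_eq_if_Res_eq:
  assumes "z \<in> S \<rightarrow>\<^sub>E A" "w \<in> S \<rightarrow>\<^sub>E A" "Res S s z = Res S s w" "z s = w s"
  shows "z = w"
proof (rule PiE_ext[OF assms(1,2)])
  fix x assume "x \<in> S"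
  then show "z x = w x"
    using assms(3,4) unfolding Res_def by (cases "x = s") (auto dest: fun_cong[where x = x])
qed

lemma fun_upd_in_PiE_same:
  "s \<in> S \<Longrightarrow> z \<in> S \<rightarrow>\<^sub>E A \<Longrightarrow> a \<in> A \<Longrightarrow> z(s := a) \<in> S \<rightarrow>\<^sub>E A"
  by (metis PiE_fun_upd insert_absorb)

lemma Res_fun_upd_same [simp]: "Res S s (z(s := a)) = Res S s z"
  unfolding Res_def by (auto simp: restrict_def)

lemma card_dvd_card_if_closed_under_update:
  fixes P :: "('i \<Rightarrow> 'a) set"
  assumes P: "P \<subseteq> S \<rightarrow>\<^sub>E A" and s: "s \<in> S"
    and closed: "\<And>z a. z \<in> P \<Longrightarrow> a \<in> A \<Longrightarrow> z(s := a) \<in> P"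
  shows "card A dvd card P"
proof -
  define g where "g z = (Res S s z, z s)" for z :: "'i \<Rightarrow> 'a"
  have "inj_on g P"
    by (rule inj_onI) (use P in \<open>auto simp: g_def intro: PiE_eq_if_Res_eq\<close>)
  moreover have "g ` P = Res S s ` P \<times> A"
  proof
    show "g ` P \<subseteq> Res S s ` P \<times> A"
      using P s by (auto simp: g_def)
    show "Res S s ` P \<times> A \<subseteq> g ` P"
    proof clarify
      fix z a assume "z \<in> P" "a \<in> A"
      then have "z(s := a) \<in> P" and "g (z(s := a)) = (Res S s z, a)"
        using closed by (auto simp: g_def)
      then show "(Res S s z, a) \<in> g ` P" by (metis image_eqI)
    qed
  qed
  ultimately have "card P = card (Res S s ` P) * card A"
    by (metis card_image card_cartesian_product)
  then show ?thesis by simp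
qed

lemma essentialI:
  assumes "z \<in> S \<rightarrow>\<^sub>E A" "w \<in> S \<rightarrow>\<^sub>E A" "Res S s z = Res S s w" "\<mu> z \<noteq> \<mu> w"
  shows "essential A S \<mu> s"
  unfolding essential_def using assms by blast

lemma not_essential_fun_upd:
  assumes "\<not> essential A S \<mu> s" "s \<in> S" "z \<in> S \<rightarrow>\<^sub>E A" "a \<in> A"
  shows "\<mu> (z(s := a)) = \<mu> z"
proof (rule ccontr)
  assume "\<mu> (z(s := a)) \<noteq> \<mu> z"
  with fun_upd_in_PiE_same[OF assms(2-4)] assms(3) have "essential A S \<mu> s"
    by (rule essentialI[OF _ _ Res_fun_upd_same])
  with assms(1) show False ..
qed

theorem mainTheorem3:
  fixes G :: "('g, 'b) monoid_scheme"
    and A :: "'a set" and S :: "'g set"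
    and P :: "('g \<Rightarrow> 'a) set" and f \<mu> :: "('g \<Rightarrow> 'a) \<Rightarrow> 'a"
    and s :: 'g
  assumes "group G"
    and "finite A" and "card A \<ge> 2"
    and "finite S" and "S \<subseteq> carrier G" and "\<one>\<^bsub>G\<^esub> \<in> S"
    and "\<mu> \<in> (S \<rightarrow>\<^sub>E A) \<rightarrow> A"
    and "generates A S \<one>\<^bsub>G\<^esub> P f \<mu>"
    and "\<not> (card A dvd card P)"
    and "s \<in> S - {\<one>\<^bsub>G\<^esub>}"
  shows "essential A S \<mu> s"
proof (rule ccontr)
  assume inessential: "\<not> essential A S \<mu> s"
  have P: "P = {z \<in> S \<rightarrow>\<^sub>E A. \<mu> z \<noteq> z \<one>\<^bsub>G\<^esub>}"
    using \<open>generates A S \<one>\<^bsub>G\<^esub> P f \<mu>\<close> unfolding generates_def by blast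
  have s: "s \<in> S" "s \<noteq> \<one>\<^bsub>G\<^esub>" using \<open>s \<in> S - {\<one>\<^bsub>G\<^esub>}\<close> by auto
  have "z(s := a) \<in> P" if "z \<in> P" "a \<in> A" for z a
  proof -
    have z: "z \<in> S \<rightarrow>\<^sub>E A" "\<mu> z \<noteq> z \<one>\<^bsub>G\<^esub>" using \<open>z \<in> P\<close> unfolding P by auto
    have "z(s := a) \<in> S \<rightarrow>\<^sub>E A" using s(1) z(1) \<open>a \<in> A\<close> by (rule fun_upd_in_PiE_same)
    moreover have "\<mu> (z(s := a)) = \<mu> z"
      using not_essential_fun_upd[OF inessential \<open>s \<in> S\<close> z(1) \<open>a \<in> A\<close>] .
    ultimately show ?thesis using z s unfolding P by simp
  qed
  then have "card A dvd card P"
    using card_dvd_card_if_closed_under_update[of P S A s] s unfolding P by blast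
  with \<open>\<not> (card A dvd card P)\<close> show False ..
qed

end
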